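(* Let $(\Omega,\mathcal{F},\mu)$ be a probability space, $\mathcal{F}^*_1\supseteq\mathcal{F}^*_2\supseteq\dots\supseteq\mathcal{F}^*_n\supseteq\mathcal{F}^*_{n+1}$ sub-$\sigma$-algebras of $\mathcal{F}$, and $\varphi_1,\dots,\varphi_n$ integrable functions with $\varphi_k$ being $\mathcal{F}^*_k$-measurable. Define $\lambda_0=0$ and $\lambda_k=\mathbb{E}^*_{k+1}\big(|\varphi_k|^2+\lambda_{k-1}^2\big)^{1/2}$ for $k=1,\dots,n$. Then \[\inf\Big\{\mathbb{E}\Big(\sum_{k=1}^n|f_k|^2\Big)^{1/2}: f_k\in L^1(\Omega),\ \mathbb{E}^*_kf_k=\varphi_k\ (k=1,\dots,n)\Big\}=\mathbb{E}\lambda_n.\]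
   Context: $\mathbb{E}^*_k$ denotes conditional expectation with respect to $\mathcal{F}^*_k$. (The value $\mathbb{E}\lambda_n$ does not depend on the choice of $\mathcal{F}^*_{n+1}$.) *)

theory Defs
  imports "HOL-Probability.Probability"
begin

text \<open>The functions lambda_k of the paper: lambda_0 = 0 and
  lambda_k = E(sqrt(phi_k^2 + lambda_(k-1)^2) | F_(k+1)), k = 1..n.
  Here F and phi are indexed by natural numbers starting at 1.\<close>
primrec cond_lambda ::
  "'a measure \<Rightarrow> (nat \<Rightarrow> 'a measure) \<Rightarrow> (nat \<Rightarrow> 'a \<Rightarrow> real) \<Rightarrow> nat \<Rightarrow> 'a \<Rightarrow> real" where
  "cond_lambda M F \<phi> 0 = (\<lambda>x. 0)"
| "cond_lambda M F \<phi> (Suc k) =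
     real_cond_exp M (F (Suc (Suc k)))
       (\<lambda>x. sqrt ((\<phi> (Suc k) x)\<^sup>2 + (cond_lambda M F \<phi> k x)\<^sup>2))"

end

theory Submission
  imports Defs
begin

text \<open>Lower bound: for an admissible family put \<open>G\<^sub>m = (\<Sum>k\<le>m. f\<^sub>k\<^sup>2)\<^sup>1\<^sup>/\<^sup>2\<close>.
  A conditional Cauchy--Schwarz inequality in \<open>\<real>\<^sup>2\<close> gives
  \<open>E\<^sup>*\<^sub>m G\<^sub>m \<ge> ((E\<^sup>*\<^sub>m f\<^sub>m)\<^sup>2 + (E\<^sup>*\<^sub>m G\<^sub>m\<^sub>-\<^sub>1)\<^sup>2)\<^sup>1\<^sup>/\<^sup>2 = (\<phi>\<^sub>m\<^sup>2 + (E\<^sup>*\<^sub>m G\<^sub>m\<^sub>-\<^sub>1)\<^sup>2)\<^sup>1\<^sup>/\<^sup>2\<close>,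
  so by induction and the tower property \<open>E\<^sup>*\<^sub>m\<^sub>+\<^sub>1 G\<^sub>m \<ge> \<lambda>\<^sub>m\<close>; integrating gives
  \<open>E G\<^sub>n \<ge> E \<lambda>\<^sub>n\<close>.

  Upper bound: with \<open>\<theta>\<^sub>k = (\<phi>\<^sub>k\<^sup>2 + \<lambda>\<^sub>k\<^sub>-\<^sub>1\<^sup>2)\<^sup>1\<^sup>/\<^sup>2\<close>, so that \<open>\<lambda>\<^sub>k = E\<^sup>*\<^sub>k\<^sub>+\<^sub>1 \<theta>\<^sub>k\<close>, the family
  \<open>f\<^sub>k = \<phi>\<^sub>k \<Prod>\<^sub>j\<^sub><\<^sub>k \<theta>\<^sub>j/\<lambda>\<^sub>j\<close> is admissible, because multiplying an
  \<open>\<F>\<^sup>*\<^sub>j\<^sub>+\<^sub>1\<close>-measurable function by \<open>\<theta>\<^sub>j/\<lambda>\<^sub>j\<close> does not change its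
  \<open>\<F>\<^sup>*\<^sub>j\<^sub>+\<^sub>1\<close>-conditional expectation. Its square function telescopes to
  \<open>\<theta>\<^sub>n \<Prod>\<^sub>j\<^sub><\<^sub>n \<theta>\<^sub>j/\<lambda>\<^sub>j\<close>, whose expectation is \<open>E \<theta>\<^sub>n = E \<lambda>\<^sub>n\<close>.\<close>

lemma mult_add_mult_le_sqrt_sum_squares:
  fixes a b c d :: real
  assumes "c\<^sup>2 + d\<^sup>2 \<le> 1"
  shows "c * a + d * b \<le> sqrt (a\<^sup>2 + b\<^sup>2)"
proof (rule real_le_rsqrt)
  have "(c * a + d * b)\<^sup>2 + (c * b - d * a)\<^sup>2 = (c\<^sup>2 + d\<^sup>2) * (a\<^sup>2 + b\<^sup>2)"
    by (simp add: algebra_simps power2_eq_square)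
  also have "\<dots> \<le> a\<^sup>2 + b\<^sup>2"
    using assms by (simp add: mult_left_le_one_le)
  finally show "(c * a + d * b)\<^sup>2 \<le> a\<^sup>2 + b\<^sup>2"
    by (smt (verit) zero_le_power2)
qed

lemma sum_squares_divide_sqrt_le_1:
  fixes u v :: real
  shows "(u / sqrt (u\<^sup>2 + v\<^sup>2))\<^sup>2 + (v / sqrt (u\<^sup>2 + v\<^sup>2))\<^sup>2 \<le> 1"
proof (cases "u\<^sup>2 + v\<^sup>2 = 0")
  case False
  then show ?thesis
    by (simp add: power_divide add_divide_distrib[symmetric])
qed simp

lemma divide_sqrt_sum_squares_dot:
  fixes u v :: real
  shows "u / sqrt (u\<^sup>2 + v\<^sup>2) * u + v / sqrt (u\<^sup>2 + v\<^sup>2) * v = sqrt (u\<^sup>2 + v\<^sup>2)"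
proof -
  have "u / sqrt (u\<^sup>2 + v\<^sup>2) * u + v / sqrt (u\<^sup>2 + v\<^sup>2) * v = (u\<^sup>2 + v\<^sup>2) / sqrt (u\<^sup>2 + v\<^sup>2)"
    by (simp add: power2_eq_square add_divide_distrib)
  then show ?thesis by (simp add: real_div_sqrt)
qed

lemma
  fixes f :: "'i \<Rightarrow> 'a \<Rightarrow> real"
  assumes "\<And>i. i \<in> I \<Longrightarrow> integrable M (f i)"
  shows borel_measurable_sqrt_sum_squares:
      "(\<lambda>x. sqrt (\<Sum>i\<in>I. (f i x)\<^sup>2)) \<in> borel_measurable M"
    and integrable_sqrt_sum_squares:
      "integrable M (\<lambda>x. sqrt (\<Sum>i\<in>I. (f i x)\<^sup>2))"
proof -
  have [measurable]: "f i \<in> borel_measurable M" if "i \<in> I" for i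
    using assms that by blast
  show meas: "(\<lambda>x. sqrt (\<Sum>i\<in>I. (f i x)\<^sup>2)) \<in> borel_measurable M"
    by measurable
  show "integrable M (\<lambda>x. sqrt (\<Sum>i\<in>I. (f i x)\<^sup>2))"
  proof (rule Bochner_Integration.integrable_bound[OF _ meas])
    show "integrable M (\<lambda>x. \<Sum>i\<in>I. \<bar>f i x\<bar>)"
      using assms by auto
    show "AE x in M. norm (sqrt (\<Sum>i\<in>I. (f i x)\<^sup>2)) \<le> norm (\<Sum>i\<in>I. \<bar>f i x\<bar>)"
      using L2_set_le_sum_abs[of "\<lambda>i. f i _" I]
      by (intro AE_I2) (simp add: L2_set_def sum_nonneg)
  qed
qed

text \<open>The value 1 where \<open>E(h | F) \<le> 0\<close> is harmless: a nonnegative \<open>h\<close> vanishes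
  almost everywhere there.\<close>
definition cond_ratio :: "'a measure \<Rightarrow> 'a measure \<Rightarrow> ('a \<Rightarrow> real) \<Rightarrow> 'a \<Rightarrow> real" where
  "cond_ratio M F h x =
     (if real_cond_exp M F h x \<le> 0 then 1 else h x / real_cond_exp M F h x)"

lemma cond_ratio_nonneg: "(\<And>x. h x \<ge> 0) \<Longrightarrow> cond_ratio M F h x \<ge> 0"
  by (simp add: cond_ratio_def)

lemma borel_measurable_cond_ratio:
  assumes [measurable]: "h \<in> borel_measurable G" "real_cond_exp M F h \<in> borel_measurable G"
  shows "cond_ratio M F h \<in> borel_measurable G"
  unfolding cond_ratio_def[abs_def] by measurable

context sigma_finite_subalgebra
begin

lemma ennreal_real_cond_exp_nonneg:
  assumes "integrable M h" "\<And>x. h x \<ge> 0"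
  shows "AE x in M. ennreal (real_cond_exp M F h x) = nn_cond_exp M F (\<lambda>x. ennreal (h x)) x"
proof -
  have [measurable]: "h \<in> borel_measurable M" using assms(1) by auto
  have "(\<lambda>x. ennreal (- h x)) = (\<lambda>x. 0)"
    using assms(2) by (auto simp: ennreal_eq_0_iff)
  moreover have "AE x in M. 0 = nn_cond_exp M F (\<lambda>x. 0) x"
    by (rule nn_cond_exp_F_meas) simp
  ultimately have neg: "AE x in M. nn_cond_exp M F (\<lambda>x. ennreal (- h x)) x = 0"
    by auto
  have "(\<integral>\<^sup>+ x. nn_cond_exp M F (\<lambda>x. ennreal (h x)) x \<partial>M) = (\<integral>\<^sup>+ x. ennreal (h x) \<partial>M)"
    using nn_cond_exp_intg[of "\<lambda>x. 1" "\<lambda>x. ennreal (h x)"] by simp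
  also have "\<dots> = ennreal (integral\<^sup>L M h)"
    using assms by (intro nn_integral_eq_integral) auto
  finally have "AE x in M. nn_cond_exp M F (\<lambda>x. ennreal (h x)) x \<noteq> \<infinity>"
    by (intro nn_integral_PInf_AE) auto
  with neg show ?thesis
    by eventually_elim (auto simp: real_cond_exp_def top.not_eq_extremum)
qed

lemma nn_integral_mult_real_cond_exp:
  assumes "integrable M h" "\<And>x. h x \<ge> 0" "\<And>x. a x \<ge> 0"
    and [measurable]: "a \<in> borel_measurable F"
  shows "(\<integral>\<^sup>+ x. ennreal (a x * h x) \<partial>M) = (\<integral>\<^sup>+ x. ennreal (a x * real_cond_exp M F h x) \<partial>M)"
proof -
  have [measurable]: "h \<in> borel_measurable M" using assms(1) by auto
  have "AE x in M. real_cond_exp M F h x \<ge> 0"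
    using assms(2) by (intro real_cond_exp_pos) auto
  have "(\<integral>\<^sup>+ x. ennreal (a x * h x) \<partial>M) = (\<integral>\<^sup>+ x. ennreal (a x) * ennreal (h x) \<partial>M)"
    using assms by (simp add: ennreal_mult)
  also have "\<dots> = (\<integral>\<^sup>+ x. ennreal (a x) * nn_cond_exp M F (\<lambda>x. ennreal (h x)) x \<partial>M)"
    by (rule nn_cond_exp_intg[symmetric]) auto
  also have "\<dots> = (\<integral>\<^sup>+ x. ennreal (a x * real_cond_exp M F h x) \<partial>M)"
    using ennreal_real_cond_exp_nonneg[OF assms(1,2)] \<open>AE x in M. real_cond_exp M F h x \<ge> 0\<close>
    by (intro nn_integral_cong_AE) (auto simp: ennreal_mult assms(3))
  finally show ?thesis .
qed

lemma integrable_mult_of_integrable_mult_cond_exp: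
  assumes "integrable M h" "\<And>x. h x \<ge> 0" "\<And>x. a x \<ge> 0"
    and [measurable]: "a \<in> borel_measurable F"
    and "integrable M (\<lambda>x. a x * real_cond_exp M F h x)"
  shows "integrable M (\<lambda>x. a x * h x)"
proof -
  have [measurable]: "h \<in> borel_measurable M" using assms(1) by auto
  have [measurable]: "a \<in> borel_measurable M" using measurable_from_subalg[OF subalg assms(4)] .
  have "AE x in M. real_cond_exp M F h x \<ge> 0"
    using assms(2) by (intro real_cond_exp_pos) auto
  then have "(\<integral>\<^sup>+ x. ennreal (norm (a x * real_cond_exp M F h x)) \<partial>M)
      = (\<integral>\<^sup>+ x. ennreal (a x * real_cond_exp M F h x) \<partial>M)"
    using assms(3) by (intro nn_integral_cong_AE) auto
  moreover have "(\<integral>\<^sup>+ x. ennreal (norm (a x * real_cond_exp M F h x)) \<partial>M) < \<infinity>"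
    using assms(5) unfolding integrable_iff_bounded by auto
  ultimately have "(\<integral>\<^sup>+ x. ennreal (norm (a x * h x)) \<partial>M) < \<infinity>"
    using nn_integral_mult_real_cond_exp[OF assms(1-4)] assms(2,3) by simp
  then show ?thesis unfolding integrable_iff_bounded by auto
qed

lemma real_cond_exp_nonpos_imp_zero:
  assumes "integrable M h" "\<And>x. h x \<ge> 0"
  shows "AE x in M. real_cond_exp M F h x \<le> 0 \<longrightarrow> h x = 0"
proof -
  define A where "A = {x \<in> space M. real_cond_exp M F h x \<le> 0}"
  have "{x \<in> space F. real_cond_exp M F h x \<le> 0} \<in> sets F"
    by measurable
  then have AF: "A \<in> sets F"
    using subalg unfolding A_def subalgebra_def by simp
  then have AM: "A \<in> sets M"
    using subalg unfolding subalgebra_def by blast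
  have "(\<integral>x. h x * indicator A x \<partial>M) = (\<integral>x. real_cond_exp M F h x * indicator A x \<partial>M)"
    using real_cond_exp_intA[OF assms(1) AF]
    by (simp add: set_lebesgue_integral_def mult.commute)
  also have "\<dots> \<le> 0"
    using integral_nonneg_AE[of "\<lambda>x. - (real_cond_exp M F h x * indicator A x)" M]
    by (auto simp: A_def indicator_def intro!: AE_I2)
  moreover have "0 \<le> (\<integral>x. h x * indicator A x \<partial>M)"
    by (rule integral_nonneg_AE) (simp add: assms(2))
  ultimately have "(\<integral>x. h x * indicator A x \<partial>M) = 0"
    by linarith
  then have "AE x in M. h x * indicator A x = 0"
    using integral_nonneg_eq_0_iff_AE[OF integrable_real_mult_indicator[OF AM assms(1)]] assms(2)
    by simp
  then show ?thesis
    using AE_space by eventually_elim (auto simp: A_def indicator_def split: if_splits)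
qed

lemma cond_ratio_mult_cond_exp:
  assumes "integrable M h" "\<And>x. h x \<ge> 0"
  shows "AE x in M. cond_ratio M F h x * real_cond_exp M F h x = h x"
proof -
  have "AE x in M. real_cond_exp M F h x \<ge> 0"
    using assms by (intro real_cond_exp_pos) auto
  with real_cond_exp_nonpos_imp_zero[OF assms] show ?thesis
    by eventually_elim (auto simp: cond_ratio_def)
qed

lemma real_cond_exp_mult_cond_ratio:
  assumes h: "integrable M h" "\<And>x. h x \<ge> 0"
    and g: "integrable M g" and [measurable]: "g \<in> borel_measurable F"
  shows "integrable M (\<lambda>x. g x * cond_ratio M F h x)"
    and "AE x in M. real_cond_exp M F (\<lambda>x. g x * cond_ratio M F h x) x = g x"
proof -
  let ?e = "real_cond_exp M F h"
  have [measurable]: "h \<in> borel_measurable M" "g \<in> borel_measurable M"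
    using h g by auto
  define q where "q x = (if ?e x \<le> 0 then 0 else g x / ?e x)" for x
  define z where "z x = (if ?e x \<le> 0 then g x else 0)" for x
  have qF [measurable]: "q \<in> borel_measurable F" and zF [measurable]: "z \<in> borel_measurable F"
    unfolding q_def[abs_def] z_def[abs_def] by measurable
  have [measurable]: "q \<in> borel_measurable M" "z \<in> borel_measurable M"
    using measurable_from_subalg[OF subalg qF] measurable_from_subalg[OF subalg zF] .
  have split: "g x * cond_ratio M F h x = z x + q x * h x" for x
    by (simp add: q_def z_def cond_ratio_def)
  have recombine: "z x + q x * ?e x = g x" for x
    by (simp add: q_def z_def)
  have z_int: "integrable M z"
    by (rule Bochner_Integration.integrable_bound[OF g]) (auto simp: z_def)
  have "integrable M (\<lambda>x. \<bar>q x\<bar> * ?e x)"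
    by (rule Bochner_Integration.integrable_bound[OF g])
      (auto simp: q_def abs_mult abs_divide intro!: AE_I2)
  then have "integrable M (\<lambda>x. \<bar>q x\<bar> * h x)"
    by (intro integrable_mult_of_integrable_mult_cond_exp[OF h]) auto
  then have qh_int: "integrable M (\<lambda>x. q x * h x)"
    by (rule Bochner_Integration.integrable_bound) (auto simp: abs_mult h(2))
  show "integrable M (\<lambda>x. g x * cond_ratio M F h x)"
    unfolding split using z_int qh_int by auto
  have "AE x in M. real_cond_exp M F (\<lambda>x. z x + q x * h x) x
      = real_cond_exp M F z x + real_cond_exp M F (\<lambda>x. q x * h x) x"
    by (rule real_cond_exp_add[OF z_int qh_int])
  moreover have "AE x in M. real_cond_exp M F z x = z x"
    by (rule real_cond_exp_F_meas[OF z_int zF])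
  moreover have "AE x in M. real_cond_exp M F (\<lambda>x. q x * h x) x = q x * ?e x"
    by (rule real_cond_exp_mult[OF qF _ qh_int]) simp
  ultimately show "AE x in M. real_cond_exp M F (\<lambda>x. g x * cond_ratio M F h x) x = g x"
    unfolding split by eventually_elim (simp add: recombine)
qed

lemma real_cond_exp_sqrt_sum_squares_ge:
  assumes f: "integrable M f" and g: "integrable M g"
  shows "AE x in M. sqrt ((real_cond_exp M F f x)\<^sup>2 + (real_cond_exp M F g x)\<^sup>2)
                    \<le> real_cond_exp M F (\<lambda>x. sqrt ((f x)\<^sup>2 + (g x)\<^sup>2)) x"
proof -
  let ?u = "real_cond_exp M F f" and ?v = "real_cond_exp M F g"
  have [measurable]: "f \<in> borel_measurable M" "g \<in> borel_measurable M"
    using f g by auto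
  \<comment> \<open>test against the \<open>F\<close>-measurable unit vector \<open>(c, d)\<close> parallel to \<open>(?u, ?v)\<close>\<close>
  define c where "c x = ?u x / sqrt ((?u x)\<^sup>2 + (?v x)\<^sup>2)" for x
  define d where "d x = ?v x / sqrt ((?u x)\<^sup>2 + (?v x)\<^sup>2)" for x
  have cF [measurable]: "c \<in> borel_measurable F" and dF [measurable]: "d \<in> borel_measurable F"
    unfolding c_def[abs_def] d_def[abs_def] by measurable
  have [measurable]: "c \<in> borel_measurable M" "d \<in> borel_measurable M"
    using measurable_from_subalg[OF subalg cF] measurable_from_subalg[OF subalg dF] .
  have unit: "(c x)\<^sup>2 + (d x)\<^sup>2 \<le> 1" for x
    unfolding c_def d_def by (rule sum_squares_divide_sqrt_le_1)
  have "(c x)\<^sup>2 \<le> 1" "(d x)\<^sup>2 \<le> 1" for x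
    using unit[of x] zero_le_power2[of "c x"] zero_le_power2[of "d x"] by linarith+
  then have c1: "\<bar>c x\<bar> \<le> 1" and d1: "\<bar>d x\<bar> \<le> 1" for x
    by (simp_all add: abs_square_le_1)
  have cf: "integrable M (\<lambda>x. c x * f x)"
    by (rule Bochner_Integration.integrable_bound[OF f]) (auto simp: abs_mult c1 mult_left_le_one_le)
  have dg: "integrable M (\<lambda>x. d x * g x)"
    by (rule Bochner_Integration.integrable_bound[OF g]) (auto simp: abs_mult d1 mult_left_le_one_le)
  have root: "integrable M (\<lambda>x. sqrt ((f x)\<^sup>2 + (g x)\<^sup>2))"
    by (rule Bochner_Integration.integrable_bound[of _ "\<lambda>x. \<bar>f x\<bar> + \<bar>g x\<bar>"])
      (use f g in \<open>auto simp: sqrt_sum_squares_le_sum_abs\<close>)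
  have "AE x in M. real_cond_exp M F (\<lambda>x. c x * f x + d x * g x) x
      = real_cond_exp M F (\<lambda>x. c x * f x) x + real_cond_exp M F (\<lambda>x. d x * g x) x"
    by (rule real_cond_exp_add[OF cf dg])
  moreover have "AE x in M. real_cond_exp M F (\<lambda>x. c x * f x) x = c x * ?u x"
    by (rule real_cond_exp_mult) (auto simp: cf)
  moreover have "AE x in M. real_cond_exp M F (\<lambda>x. d x * g x) x = d x * ?v x"
    by (rule real_cond_exp_mult) (auto simp: dg)
  moreover have "AE x in M. real_cond_exp M F (\<lambda>x. c x * f x + d x * g x) x
      \<le> real_cond_exp M F (\<lambda>x. sqrt ((f x)\<^sup>2 + (g x)\<^sup>2)) x"
    using cf dg root
    by (intro real_cond_exp_mono AE_I2 mult_add_mult_le_sqrt_sum_squares unit) auto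
  ultimately show ?thesis
  proof eventually_elim
    case (elim x)
    have "sqrt ((?u x)\<^sup>2 + (?v x)\<^sup>2) = c x * ?u x + d x * ?v x"
      unfolding c_def d_def by (rule divide_sqrt_sum_squares_dot[symmetric])
    with elim show ?case by simp
  qed
qed

end

locale decreasing_subalgebras =
  fixes M :: "'a measure" and F :: "nat \<Rightarrow> 'a measure"
    and \<phi> :: "nat \<Rightarrow> 'a \<Rightarrow> real" and n :: nat
  assumes prob_space: "prob_space M"
    and subalgebra: "\<And>k. k \<in> {1..Suc n} \<Longrightarrow> subalgebra M (F k)"
    and sets_F_Suc: "\<And>k. k \<in> {1..n} \<Longrightarrow> sets (F (Suc k)) \<subseteq> sets (F k)"
    and integrable_\<phi>: "\<And>k. k \<in> {1..n} \<Longrightarrow> integrable M (\<phi> k)"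
    and measurable_\<phi>: "\<And>k. k \<in> {1..n} \<Longrightarrow> \<phi> k \<in> borel_measurable (F k)"
begin

abbreviation "E k \<equiv> real_cond_exp M (F k)"
abbreviation "lam \<equiv> cond_lambda M F \<phi>"

definition admissible :: "(nat \<Rightarrow> 'a \<Rightarrow> real) \<Rightarrow> bool" where
  "admissible f \<longleftrightarrow> (\<forall>k\<in>{1..n}. integrable M (f k) \<and> (AE x in M. E k (f k) x = \<phi> k x))"

definition \<theta> :: "nat \<Rightarrow> 'a \<Rightarrow> real" where
  "\<theta> k x = sqrt ((\<phi> k x)\<^sup>2 + (lam (k - 1) x)\<^sup>2)"

lemma sigma_finite_subalgebra_F: "k \<in> {1..Suc n} \<Longrightarrow> sigma_finite_subalgebra M (F k)"
  unfolding sigma_finite_subalgebra_def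
  using subalgebra finite_measure_restr_to_subalg prob_space prob_space.finite_measure
    finite_measure.sigma_finite_measure
  by blast

lemma sets_F_antimono:
  assumes "1 \<le> j" "j \<le> k" "k \<le> Suc n"
  shows "sets (F k) \<subseteq> sets (F j)"
  using assms(2,3)
proof (induction k rule: dec_induct)
  case (step m)
  then show ?case using sets_F_Suc[of m] assms(1) by auto
qed simp

lemma subalgebra_F_F: "1 \<le> j \<Longrightarrow> j \<le> k \<Longrightarrow> k \<le> Suc n \<Longrightarrow> subalgebra (F j) (F k)"
  using sets_F_antimono[of j k] subalgebra[of j] subalgebra[of k] unfolding subalgebra_def by auto

lemma measurable_F_antimono:
  "g \<in> borel_measurable (F k) \<Longrightarrow> 1 \<le> j \<Longrightarrow> j \<le> k \<Longrightarrow> k \<le> Suc n \<Longrightarrow> g \<in> borel_measurable (F j)"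
  using measurable_from_subalg[OF subalgebra_F_F] by blast

lemma measurable_F_M: "g \<in> borel_measurable (F k) \<Longrightarrow> 1 \<le> k \<Longrightarrow> k \<le> Suc n \<Longrightarrow> g \<in> borel_measurable M"
  using measurable_from_subalg[OF subalgebra] by auto

lemma cond_lambda_eq: "1 \<le> k \<Longrightarrow> lam k = E (Suc k) (\<theta> k)"
  by (cases k) (auto simp: \<theta>_def[abs_def])

lemma borel_measurable_cond_lambda_F: "lam k \<in> borel_measurable (F (Suc k))"
  by (cases k) auto

lemma \<theta>_nonneg: "\<theta> k x \<ge> 0"
  by (simp add: \<theta>_def)

lemma borel_measurable_\<theta>_F: "1 \<le> k \<Longrightarrow> k \<le> n \<Longrightarrow> \<theta> k \<in> borel_measurable (F k)"
  using measurable_\<phi>[of k] borel_measurable_cond_lambda_F[of "k - 1"]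
  unfolding \<theta>_def[abs_def] by measurable auto

lemma borel_measurable_\<theta>: "1 \<le> k \<Longrightarrow> k \<le> n \<Longrightarrow> \<theta> k \<in> borel_measurable M"
  using measurable_F_M[OF borel_measurable_\<theta>_F] by auto

lemma integrable_cond_lambda_\<theta>:
  "k \<le> n \<Longrightarrow> integrable M (lam k) \<and> (1 \<le> k \<longrightarrow> integrable M (\<theta> k))"
proof (induction k)
  case (Suc k)
  have "integrable M (\<theta> (Suc k))"
    unfolding \<theta>_def
    by (rule Bochner_Integration.integrable_bound[of _ "\<lambda>x. \<bar>\<phi> (Suc k) x\<bar> + \<bar>lam k x\<bar>"])
      (use Suc integrable_\<phi>[of "Suc k"] in \<open>auto simp: sqrt_sum_squares_le_sum_abs\<close>)
  moreover from this have "integrable M (lam (Suc k))"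
    using sigma_finite_subalgebra.real_cond_exp_int(1)[OF sigma_finite_subalgebra_F[of "Suc (Suc k)"]]
      Suc cond_lambda_eq[of "Suc k"] by auto
  ultimately show ?case by simp
qed simp

lemma integrable_cond_lambda: "k \<le> n \<Longrightarrow> integrable M (lam k)"
  using integrable_cond_lambda_\<theta> by blast

lemma integrable_\<theta>: "1 \<le> k \<Longrightarrow> k \<le> n \<Longrightarrow> integrable M (\<theta> k)"
  using integrable_cond_lambda_\<theta> by blast

lemma cond_lambda_nonneg: "k \<le> n \<Longrightarrow> AE x in M. lam k x \<ge> 0"
proof (cases k)
  case (Suc m)
  assume "k \<le> n"
  then show ?thesis
    using Suc cond_lambda_eq[of k] \<theta>_nonneg integrable_\<theta>[of k]
      sigma_finite_subalgebra.real_cond_exp_pos[OF sigma_finite_subalgebra_F[of "Suc k"], of "\<theta> k"]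
    by auto
qed simp

lemma sqrt_sum_squares_Suc:
  "sqrt (\<Sum>k\<in>{1..Suc m}. (f k)\<^sup>2) = sqrt ((f (Suc m))\<^sup>2 + (sqrt (\<Sum>k\<in>{1..m}. (f k)\<^sup>2))\<^sup>2)"
  by (simp add: sum_nonneg add.commute)

lemma cond_lambda_le_cond_exp_sqrt_sum_squares:
  assumes f: "admissible f" and "m \<le> n"
  shows "AE x in M. lam m x \<le> E (Suc m) (\<lambda>x. sqrt (\<Sum>k\<in>{1..m}. (f k x)\<^sup>2)) x"
  using \<open>m \<le> n\<close>
proof (induction m)
  case 0
  interpret sigma_finite_subalgebra M "F 1"
    using sigma_finite_subalgebra_F[of 1] by simp
  show ?case
    using real_cond_exp_F_meas[of "\<lambda>x. 0"] by auto
next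
  case (Suc m)
  let ?G = "\<lambda>m x. sqrt (\<Sum>k\<in>{1..m}. (f k x)\<^sup>2)"
  have mn: "m \<le> n"
    using Suc.prems by simp
  interpret F1: sigma_finite_subalgebra M "F (Suc m)"
    using sigma_finite_subalgebra_F[of "Suc m"] Suc by simp
  interpret F2: sigma_finite_subalgebra M "F (Suc (Suc m))"
    using sigma_finite_subalgebra_F[of "Suc (Suc m)"] Suc by simp
  have f_int: "integrable M (f k)" if "k \<in> {1..n}" for k
    using f that unfolding admissible_def by blast
  have G_int: "integrable M (?G k)" if "k \<le> n" for k
    using that by (intro integrable_sqrt_sum_squares f_int) auto
  have "AE x in M. E (Suc m) (f (Suc m)) x = \<phi> (Suc m) x"
    using f Suc unfolding admissible_def by auto
  moreover have "AE x in M. sqrt ((E (Suc m) (f (Suc m)) x)\<^sup>2 + (E (Suc m) (?G m) x)\<^sup>2)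
      \<le> E (Suc m) (?G (Suc m)) x"
    unfolding sqrt_sum_squares_Suc
    by (rule F1.real_cond_exp_sqrt_sum_squares_ge) (use Suc f_int G_int in auto)
  moreover note Suc.IH[OF mn] cond_lambda_nonneg[OF mn]
  ultimately have "AE x in M. \<theta> (Suc m) x \<le> E (Suc m) (?G (Suc m)) x"
  proof eventually_elim
    case (elim x)
    then have "\<theta> (Suc m) x \<le> sqrt ((E (Suc m) (f (Suc m)) x)\<^sup>2 + (E (Suc m) (?G m) x)\<^sup>2)"
      by (auto simp: \<theta>_def intro!: power_mono)
    with elim show ?case by linarith
  qed
  then have "AE x in M. E (Suc (Suc m)) (\<theta> (Suc m)) x \<le> E (Suc (Suc m)) (E (Suc m) (?G (Suc m))) x"
    by (rule F2.real_cond_exp_mono)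
      (use Suc integrable_\<theta> F1.real_cond_exp_int(1)[OF G_int[OF Suc.prems]] in auto)
  moreover have "AE x in M. E (Suc (Suc m)) (E (Suc m) (?G (Suc m))) x = E (Suc (Suc m)) (?G (Suc m)) x"
    by (rule F2.real_cond_exp_nested_subalg[OF F1.subalg subalgebra_F_F G_int]) (use Suc in auto)
  ultimately show ?case
    using cond_lambda_eq[of "Suc m"] by auto
qed

lemma integral_cond_lambda_le:
  assumes "admissible f"
  shows "integral\<^sup>L M (lam n) \<le> integral\<^sup>L M (\<lambda>x. sqrt (\<Sum>k\<in>{1..n}. (f k x)\<^sup>2))"
proof -
  interpret sigma_finite_subalgebra M "F (Suc n)"
    using sigma_finite_subalgebra_F[of "Suc n"] by simp
  have G_int: "integrable M (\<lambda>x. sqrt (\<Sum>k\<in>{1..n}. (f k x)\<^sup>2))"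
    using assms unfolding admissible_def by (intro integrable_sqrt_sum_squares) auto
  have "integral\<^sup>L M (lam n) \<le> integral\<^sup>L M (E (Suc n) (\<lambda>x. sqrt (\<Sum>k\<in>{1..n}. (f k x)\<^sup>2)))"
    using cond_lambda_le_cond_exp_sqrt_sum_squares[OF assms order.refl]
    by (intro integral_mono_AE integrable_cond_lambda real_cond_exp_int(1)[OF G_int]) auto
  also have "\<dots> = integral\<^sup>L M (\<lambda>x. sqrt (\<Sum>k\<in>{1..n}. (f k x)\<^sup>2))"
    by (rule real_cond_exp_int(2)[OF G_int])
  finally show ?thesis .
qed

definition \<rho> :: "nat \<Rightarrow> 'a \<Rightarrow> real" where
  "\<rho> k x = (\<Prod>j\<in>{1..<k}. cond_ratio M (F (Suc j)) (\<theta> j) x)"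

lemma \<rho>_nonneg: "\<rho> k x \<ge> 0"
  by (simp add: \<rho>_def cond_ratio_nonneg \<theta>_nonneg prod_nonneg)

lemma \<rho>_Suc: "1 \<le> m \<Longrightarrow> \<rho> (Suc m) x = \<rho> m x * cond_ratio M (F (Suc m)) (\<theta> m) x"
  by (simp add: \<rho>_def prod.atLeastLessThan_Suc)

lemma borel_measurable_cond_ratio_F:
  "1 \<le> j \<Longrightarrow> j \<le> n \<Longrightarrow> cond_ratio M (F (Suc j)) (\<theta> j) \<in> borel_measurable (F j)"
  using borel_measurable_\<theta>_F measurable_F_antimono[OF borel_measurable_cond_lambda_F, of j j]
    cond_lambda_eq[of j]
  by (intro borel_measurable_cond_ratio) auto

lemma cond_ratio_mult_cond_lambda:
  "1 \<le> j \<Longrightarrow> j \<le> n \<Longrightarrow> AE x in M. cond_ratio M (F (Suc j)) (\<theta> j) x * lam j x = \<theta> j x"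
  using sigma_finite_subalgebra.cond_ratio_mult_cond_exp[OF sigma_finite_subalgebra_F integrable_\<theta> \<theta>_nonneg]
    cond_lambda_eq[of j]
  by auto

lemma real_cond_exp_mult_\<rho>:
  assumes "1 \<le> k" "k \<le> n" and g: "g \<in> borel_measurable (F k)" "integrable M g"
  shows "integrable M (\<lambda>x. g x * \<rho> k x) \<and> (AE x in M. E k (\<lambda>x. g x * \<rho> k x) x = g x)"
  using assms
proof (induction k arbitrary: g rule: dec_induct)
  case base
  interpret sigma_finite_subalgebra M "F 1"
    using sigma_finite_subalgebra_F[of 1] by simp
  show ?case
    using real_cond_exp_F_meas[OF base.prems(3,2)] base.prems by (simp add: \<rho>_def)
next
  case (step m)
  interpret sigma_finite_subalgebra M "F (Suc m)"
    using sigma_finite_subalgebra_F[of "Suc m"] step by simp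
  define w where "w x = g x * cond_ratio M (F (Suc m)) (\<theta> m) x" for x
  have w: "integrable M w" "AE x in M. E (Suc m) w x = g x"
    using real_cond_exp_mult_cond_ratio[OF integrable_\<theta> \<theta>_nonneg step.prems(3,2)] step
    unfolding w_def[abs_def] by auto
  have "m \<le> n"
    using step.prems(1) by simp
  have [measurable]: "g \<in> borel_measurable (F m)"
    using measurable_F_antimono[OF step.prems(2), of m] step by simp
  have [measurable]: "cond_ratio M (F (Suc m)) (\<theta> m) \<in> borel_measurable (F m)"
    using borel_measurable_cond_ratio_F[OF step.hyps(1) \<open>m \<le> n\<close>] .
  have "w \<in> borel_measurable (F m)"
    unfolding w_def[abs_def] by measurable
  then have IH: "integrable M (\<lambda>x. w x * \<rho> m x)" "AE x in M. E m (\<lambda>x. w x * \<rho> m x) x = w x"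
    using step.IH[of w] step w by auto
  have eq: "(\<lambda>x. g x * \<rho> (Suc m) x) = (\<lambda>x. w x * \<rho> m x)"
    using step by (auto simp: \<rho>_Suc w_def)
  have "AE x in M. E (Suc m) (E m (\<lambda>x. w x * \<rho> m x)) x = E (Suc m) (\<lambda>x. w x * \<rho> m x) x"
    by (rule real_cond_exp_nested_subalg[OF subalgebra subalgebra_F_F IH(1)]) (use step in auto)
  moreover have "AE x in M. E (Suc m) (E m (\<lambda>x. w x * \<rho> m x)) x = E (Suc m) w x"
    by (rule real_cond_exp_cong) (use IH w(1) in auto)
  ultimately show ?case
    unfolding eq using IH(1) w(2) by auto
qed

lemma sum_squares_\<phi>_\<rho>:
  assumes "1 \<le> m" and "\<forall>j\<in>{1..<m}. cond_ratio M (F (Suc j)) (\<theta> j) x * lam j x = \<theta> j x"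
  shows "(\<Sum>k\<in>{1..m}. (\<phi> k x * \<rho> k x)\<^sup>2) = (\<rho> m x * \<theta> m x)\<^sup>2"
  using assms
proof (induction m rule: dec_induct)
  case base
  then show ?case by (simp add: \<rho>_def \<theta>_def)
next
  case (step l)
  have "(\<Sum>k\<in>{1..Suc l}. (\<phi> k x * \<rho> k x)\<^sup>2) = (\<rho> l x * \<theta> l x)\<^sup>2 + (\<phi> (Suc l) x * \<rho> (Suc l) x)\<^sup>2"
    using step by (simp add: sum.cl_ivl_Suc)
  also have "\<theta> l x = cond_ratio M (F (Suc l)) (\<theta> l) x * lam l x"
    using step.prems step.hyps(1) by simp
  finally show ?case
    using step.hyps(1) by (simp add: \<rho>_Suc \<theta>_def power_mult_distrib algebra_simps)
qed

lemma admissible_\<phi>_\<rho>: "admissible (\<lambda>k x. \<phi> k x * \<rho> k x)"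
  unfolding admissible_def
  using real_cond_exp_mult_\<rho> measurable_\<phi> integrable_\<phi> by auto

lemma integral_sqrt_sum_squares_\<phi>_\<rho>:
  "integral\<^sup>L M (\<lambda>x. sqrt (\<Sum>k\<in>{1..n}. (\<phi> k x * \<rho> k x)\<^sup>2)) = integral\<^sup>L M (lam n)"
proof (cases "n = 0")
  case False
  then have n: "1 \<le> n" by simp
  interpret Fn: sigma_finite_subalgebra M "F n"
    using sigma_finite_subalgebra_F[of n] n by simp
  interpret Fn1: sigma_finite_subalgebra M "F (Suc n)"
    using sigma_finite_subalgebra_F[of "Suc n"] by simp
  have \<theta>\<rho>: "integrable M (\<lambda>x. \<theta> n x * \<rho> n x)" "AE x in M. E n (\<lambda>x. \<theta> n x * \<rho> n x) x = \<theta> n x"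
    using real_cond_exp_mult_\<rho>[OF n order.refl borel_measurable_\<theta>_F integrable_\<theta>] n by auto
  have "AE x in M. \<forall>j\<in>{1..<n}. cond_ratio M (F (Suc j)) (\<theta> j) x * lam j x = \<theta> j x"
    by (intro AE_finite_allI cond_ratio_mult_cond_lambda) auto
  then have "AE x in M. sqrt (\<Sum>k\<in>{1..n}. (\<phi> k x * \<rho> k x)\<^sup>2) = \<theta> n x * \<rho> n x"
  proof eventually_elim
    case (elim x)
    have "sqrt (\<Sum>k\<in>{1..n}. (\<phi> k x * \<rho> k x)\<^sup>2) = \<bar>\<rho> n x * \<theta> n x\<bar>"
      unfolding sum_squares_\<phi>_\<rho>[OF n elim] by (rule real_sqrt_abs)
    then show ?case
      by (simp add: \<rho>_nonneg \<theta>_nonneg mult.commute)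
  qed
  then have "integral\<^sup>L M (\<lambda>x. sqrt (\<Sum>k\<in>{1..n}. (\<phi> k x * \<rho> k x)\<^sup>2)) = integral\<^sup>L M (\<lambda>x. \<theta> n x * \<rho> n x)"
    using admissible_\<phi>_\<rho> \<theta>\<rho>(1) unfolding admissible_def
    by (intro integral_cong_AE borel_measurable_sqrt_sum_squares) auto
  also have "\<dots> = integral\<^sup>L M (E n (\<lambda>x. \<theta> n x * \<rho> n x))"
    by (rule Fn.real_cond_exp_int(2)[OF \<theta>\<rho>(1), symmetric])
  also have "\<dots> = integral\<^sup>L M (\<theta> n)"
    by (rule integral_cong_AE[OF _ borel_measurable_\<theta>[OF n order.refl] \<theta>\<rho>(2)]) simp
  also have "\<dots> = integral\<^sup>L M (E (Suc n) (\<theta> n))"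
    by (rule Fn1.real_cond_exp_int(2)[OF integrable_\<theta>[OF n order.refl], symmetric])
  finally show ?thesis
    using cond_lambda_eq[OF n] by simp
qed simp

end

theorem lemma1p3:
  fixes M :: "'a measure" and F :: "nat \<Rightarrow> 'a measure"
    and \<phi> :: "nat \<Rightarrow> 'a \<Rightarrow> real" and n :: nat
  assumes "prob_space M"
    and "\<And>k. k \<in> {1..Suc n} \<Longrightarrow> subalgebra M (F k)"
    and "\<And>k. k \<in> {1..n} \<Longrightarrow> sets (F (Suc k)) \<subseteq> sets (F k)"
    and "\<And>k. k \<in> {1..n} \<Longrightarrow> integrable M (\<phi> k)"
    and "\<And>k. k \<in> {1..n} \<Longrightarrow> \<phi> k \<in> borel_measurable (F k)"
  shows "Inf {integral\<^sup>L M (\<lambda>x. sqrt (\<Sum>k\<in>{1..n}. (f k x)\<^sup>2)) | f.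
              \<forall>k\<in>{1..n}. integrable M (f k) \<and>
                (AE x in M. real_cond_exp M (F k) (f k) x = \<phi> k x)}
         = integral\<^sup>L M (cond_lambda M F \<phi> n)"
proof -
  interpret decreasing_subalgebras M F \<phi> n
    by (rule decreasing_subalgebras.intro) (fact assms)+
  show ?thesis
    unfolding admissible_def[symmetric]
  proof (rule cInf_eq_minimum)
    show "integral\<^sup>L M (lam n)
        \<in> {integral\<^sup>L M (\<lambda>x. sqrt (\<Sum>k\<in>{1..n}. (f k x)\<^sup>2)) | f. admissible f}"
      using admissible_\<phi>_\<rho> integral_sqrt_sum_squares_\<phi>_\<rho> by force
  qed (use integral_cond_lambda_le in blast)
qed

end
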